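(* Let $C$ be a concrete category (each object has an underlying set and morphisms are functions composed as functions) such that (i) set-theoretic finite products and equalizers are also finite products and equalizers in $C$, and (ii) for every $C$-morphism $f:X\to Y$ there are a $C$-object $U$ and a $C$-morphism $u:U\to X\times Y$ with the graph of $f$ equal to the range of $u$. Then $\mathrm{Rel}(C)$, equipped with the cartesian product as monoidal product and the cartesian trace, is a traced symmetric monoidal category having $C$ as a subcategory. If moreover a function between $C$-objects is a $C$-morphism if and only if its graph is the range of some $C$-morphism, then this subcategory consists precisely of those morphisms of $\mathrm{Rel}(C)$ which are set-theoretic functions.
   Context: A $C$-relation between $C$-objects $X$ and $Y$ is a relation $r\subseteq X\times Y$ which equals the range of some $C$-morphism $u:U\to X\times Y$ for some $C$-object $U$. $\mathrm{Rel}(C)$ is the category with the same objects as $C$, whose morphisms from $X$ to $Y$ are the $C$-relations between $X$ and $Y$, composed by relational composition. The cartesian trace of a relation $r\subseteq (X\times Z)\times(Y\times Z)$ is the relation $\mathsf{Tr}(r)\subseteq X\times Y$ with $(x,y)\in\mathsf{Tr}(r)$ iff there is $z\in Z$ with $((x,z),(y,z))\in r$. *)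

theory Defs
  imports "HOL-Library.FuncSet"
begin

section \<open>Abstract (non-strict) traced symmetric monoidal categories\<close>

text \<open>A category is given by a set of objects Ob, hom-sets Hom X Y, composition
  cmp g f (first f, then g) and identities idm X.\<close>

definition is_category ::
  "'o set \<Rightarrow> ('o \<Rightarrow> 'o \<Rightarrow> 'm set) \<Rightarrow> ('m \<Rightarrow> 'm \<Rightarrow> 'm) \<Rightarrow> ('o \<Rightarrow> 'm) \<Rightarrow> bool" where
  "is_category Ob Hom cmp idm \<longleftrightarrow>
     (\<forall>X\<in>Ob. idm X \<in> Hom X X) \<and>
     (\<forall>X\<in>Ob. \<forall>Y\<in>Ob. \<forall>Z\<in>Ob. \<forall>f\<in>Hom X Y. \<forall>g\<in>Hom Y Z. cmp g f \<in> Hom X Z) \<and>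
     (\<forall>X\<in>Ob. \<forall>Y\<in>Ob. \<forall>f\<in>Hom X Y. cmp f (idm X) = f \<and> cmp (idm Y) f = f) \<and>
     (\<forall>W\<in>Ob. \<forall>X\<in>Ob. \<forall>Y\<in>Ob. \<forall>Z\<in>Ob. \<forall>f\<in>Hom W X. \<forall>g\<in>Hom X Y. \<forall>h\<in>Hom Y Z.
        cmp h (cmp g f) = cmp (cmp h g) f)"

definition is_iso ::
  "('o \<Rightarrow> 'o \<Rightarrow> 'm set) \<Rightarrow> ('m \<Rightarrow> 'm \<Rightarrow> 'm) \<Rightarrow> ('o \<Rightarrow> 'm) \<Rightarrow> 'o \<Rightarrow> 'o \<Rightarrow> 'm \<Rightarrow> bool" where
  "is_iso Hom cmp idm X Y f \<longleftrightarrow>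
     f \<in> Hom X Y \<and> (\<exists>g\<in>Hom Y X. cmp g f = idm X \<and> cmp f g = idm Y)"

definition cinv ::
  "('o \<Rightarrow> 'o \<Rightarrow> 'm set) \<Rightarrow> ('m \<Rightarrow> 'm \<Rightarrow> 'm) \<Rightarrow> ('o \<Rightarrow> 'm) \<Rightarrow> 'o \<Rightarrow> 'o \<Rightarrow> 'm \<Rightarrow> 'm" where
  "cinv Hom cmp idm X Y f = (THE g. g \<in> Hom Y X \<and> cmp g f = idm X \<and> cmp f g = idm Y)"

text \<open>Monoidal category: tensor T on objects, tm on morphisms, unit I,
  associator a X Y Z : (X\<otimes>Y)\<otimes>Z \<rightarrow> X\<otimes>(Y\<otimes>Z), unitors l X : I\<otimes>X \<rightarrow> X, r X : X\<otimes>I \<rightarrow> X.\<close>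

definition is_monoidal_category ::
  "'o set \<Rightarrow> ('o \<Rightarrow> 'o \<Rightarrow> 'm set) \<Rightarrow> ('m \<Rightarrow> 'm \<Rightarrow> 'm) \<Rightarrow> ('o \<Rightarrow> 'm)
   \<Rightarrow> ('o \<Rightarrow> 'o \<Rightarrow> 'o) \<Rightarrow> ('m \<Rightarrow> 'm \<Rightarrow> 'm) \<Rightarrow> 'o
   \<Rightarrow> ('o \<Rightarrow> 'o \<Rightarrow> 'o \<Rightarrow> 'm) \<Rightarrow> ('o \<Rightarrow> 'm) \<Rightarrow> ('o \<Rightarrow> 'm) \<Rightarrow> bool" where
  "is_monoidal_category Ob Hom cmp idm T tm I a l r \<longleftrightarrow>
     is_category Ob Hom cmp idm \<and>
     I \<in> Ob \<and>
     (\<forall>X\<in>Ob. \<forall>Y\<in>Ob. T X Y \<in> Ob) \<and>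
     (\<forall>X\<in>Ob. \<forall>Y\<in>Ob. \<forall>X'\<in>Ob. \<forall>Y'\<in>Ob. \<forall>f\<in>Hom X Y. \<forall>g\<in>Hom X' Y'.
        tm f g \<in> Hom (T X X') (T Y Y')) \<and>
     (\<forall>X\<in>Ob. \<forall>Y\<in>Ob. tm (idm X) (idm Y) = idm (T X Y)) \<and>
     (\<forall>X\<in>Ob. \<forall>Y\<in>Ob. \<forall>Z\<in>Ob. \<forall>X'\<in>Ob. \<forall>Y'\<in>Ob. \<forall>Z'\<in>Ob.
        \<forall>f\<in>Hom X Y. \<forall>g\<in>Hom Y Z. \<forall>f'\<in>Hom X' Y'. \<forall>g'\<in>Hom Y' Z'.
        tm (cmp g f) (cmp g' f') = cmp (tm g g') (tm f f')) \<and>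
     (\<forall>X\<in>Ob. \<forall>Y\<in>Ob. \<forall>Z\<in>Ob. is_iso Hom cmp idm (T (T X Y) Z) (T X (T Y Z)) (a X Y Z)) \<and>
     (\<forall>X\<in>Ob. \<forall>Y\<in>Ob. \<forall>Z\<in>Ob. \<forall>X'\<in>Ob. \<forall>Y'\<in>Ob. \<forall>Z'\<in>Ob.
        \<forall>f\<in>Hom X X'. \<forall>g\<in>Hom Y Y'. \<forall>h\<in>Hom Z Z'.
        cmp (a X' Y' Z') (tm (tm f g) h) = cmp (tm f (tm g h)) (a X Y Z)) \<and>
     (\<forall>X\<in>Ob. is_iso Hom cmp idm (T I X) X (l X)) \<and>
     (\<forall>X\<in>Ob. \<forall>Y\<in>Ob. \<forall>f\<in>Hom X Y. cmp (l Y) (tm (idm I) f) = cmp f (l X)) \<and>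
     (\<forall>X\<in>Ob. is_iso Hom cmp idm (T X I) X (r X)) \<and>
     (\<forall>X\<in>Ob. \<forall>Y\<in>Ob. \<forall>f\<in>Hom X Y. cmp (r Y) (tm f (idm I)) = cmp f (r X)) \<and>
     (\<forall>W\<in>Ob. \<forall>X\<in>Ob. \<forall>Y\<in>Ob. \<forall>Z\<in>Ob.
        cmp (a W X (T Y Z)) (a (T W X) Y Z) =
        cmp (tm (idm W) (a X Y Z)) (cmp (a W (T X Y) Z) (tm (a W X Y) (idm Z)))) \<and>
     (\<forall>X\<in>Ob. \<forall>Y\<in>Ob. cmp (tm (idm X) (l Y)) (a X I Y) = tm (r X) (idm Y))"

definition is_symmetric_monoidal_category ::
  "'o set \<Rightarrow> ('o \<Rightarrow> 'o \<Rightarrow> 'm set) \<Rightarrow> ('m \<Rightarrow> 'm \<Rightarrow> 'm) \<Rightarrow> ('o \<Rightarrow> 'm)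
   \<Rightarrow> ('o \<Rightarrow> 'o \<Rightarrow> 'o) \<Rightarrow> ('m \<Rightarrow> 'm \<Rightarrow> 'm) \<Rightarrow> 'o
   \<Rightarrow> ('o \<Rightarrow> 'o \<Rightarrow> 'o \<Rightarrow> 'm) \<Rightarrow> ('o \<Rightarrow> 'm) \<Rightarrow> ('o \<Rightarrow> 'm) \<Rightarrow> ('o \<Rightarrow> 'o \<Rightarrow> 'm) \<Rightarrow> bool" where
  "is_symmetric_monoidal_category Ob Hom cmp idm T tm I a l r s \<longleftrightarrow>
     is_monoidal_category Ob Hom cmp idm T tm I a l r \<and>
     (\<forall>X\<in>Ob. \<forall>Y\<in>Ob. s X Y \<in> Hom (T X Y) (T Y X)) \<and>
     (\<forall>X\<in>Ob. \<forall>Y\<in>Ob. \<forall>X'\<in>Ob. \<forall>Y'\<in>Ob. \<forall>f\<in>Hom X X'. \<forall>g\<in>Hom Y Y'.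
        cmp (s X' Y') (tm f g) = cmp (tm g f) (s X Y)) \<and>
     (\<forall>X\<in>Ob. \<forall>Y\<in>Ob. cmp (s Y X) (s X Y) = idm (T X Y)) \<and>
     (\<forall>X\<in>Ob. \<forall>Y\<in>Ob. \<forall>Z\<in>Ob.
        cmp (a Y Z X) (cmp (s X (T Y Z)) (a X Y Z)) =
        cmp (tm (idm Y) (s X Z)) (cmp (a Y X Z) (tm (s X Y) (idm Z))))"

text \<open>Traced symmetric monoidal category (Joyal--Street--Verity axioms, in the
  non-strict form): Tr U X Y maps Hom (X\<otimes>U) (Y\<otimes>U) to Hom X Y.\<close>

definition is_traced_symmetric_monoidal_category ::
  "'o set \<Rightarrow> ('o \<Rightarrow> 'o \<Rightarrow> 'm set) \<Rightarrow> ('m \<Rightarrow> 'm \<Rightarrow> 'm) \<Rightarrow> ('o \<Rightarrow> 'm)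
   \<Rightarrow> ('o \<Rightarrow> 'o \<Rightarrow> 'o) \<Rightarrow> ('m \<Rightarrow> 'm \<Rightarrow> 'm) \<Rightarrow> 'o
   \<Rightarrow> ('o \<Rightarrow> 'o \<Rightarrow> 'o \<Rightarrow> 'm) \<Rightarrow> ('o \<Rightarrow> 'm) \<Rightarrow> ('o \<Rightarrow> 'm) \<Rightarrow> ('o \<Rightarrow> 'o \<Rightarrow> 'm)
   \<Rightarrow> ('o \<Rightarrow> 'o \<Rightarrow> 'o \<Rightarrow> 'm \<Rightarrow> 'm) \<Rightarrow> bool" where
  "is_traced_symmetric_monoidal_category Ob Hom cmp idm T tm I a l r s Tr \<longleftrightarrow>
     is_symmetric_monoidal_category Ob Hom cmp idm T tm I a l r s \<and>
     (\<forall>U\<in>Ob. \<forall>X\<in>Ob. \<forall>Y\<in>Ob. \<forall>f\<in>Hom (T X U) (T Y U). Tr U X Y f \<in> Hom X Y) \<and>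
     \<comment> \<open>tightening (naturality in X and Y)\<close>
     (\<forall>U\<in>Ob. \<forall>X\<in>Ob. \<forall>Y\<in>Ob. \<forall>X'\<in>Ob. \<forall>Y'\<in>Ob.
        \<forall>f\<in>Hom (T X U) (T Y U). \<forall>g\<in>Hom X' X. \<forall>h\<in>Hom Y Y'.
        Tr U X' Y' (cmp (tm h (idm U)) (cmp f (tm g (idm U)))) = cmp h (cmp (Tr U X Y f) g)) \<and>
     \<comment> \<open>sliding (dinaturality in U)\<close>
     (\<forall>U\<in>Ob. \<forall>U'\<in>Ob. \<forall>X\<in>Ob. \<forall>Y\<in>Ob.
        \<forall>f\<in>Hom (T X U) (T Y U'). \<forall>g\<in>Hom U' U.
        Tr U X Y (cmp (tm (idm Y) g) f) = Tr U' X Y (cmp f (tm (idm X) g))) \<and>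
     \<comment> \<open>vanishing I\<close>
     (\<forall>X\<in>Ob. \<forall>Y\<in>Ob. \<forall>f\<in>Hom (T X I) (T Y I).
        cmp (Tr I X Y f) (r X) = cmp (r Y) f) \<and>
     \<comment> \<open>vanishing II\<close>
     (\<forall>U\<in>Ob. \<forall>V\<in>Ob. \<forall>X\<in>Ob. \<forall>Y\<in>Ob. \<forall>f\<in>Hom (T X (T U V)) (T Y (T U V)).
        Tr (T U V) X Y f =
        Tr U X Y (Tr V (T X U) (T Y U)
          (cmp (cinv Hom cmp idm (T (T Y U) V) (T Y (T U V)) (a Y U V)) (cmp f (a X U V))))) \<and>
     \<comment> \<open>superposing\<close>
     (\<forall>U\<in>Ob. \<forall>X\<in>Ob. \<forall>Y\<in>Ob. \<forall>Z\<in>Ob. \<forall>f\<in>Hom (T X U) (T Y U).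
        Tr U (T Z X) (T Z Y)
          (cmp (cinv Hom cmp idm (T (T Z Y) U) (T Z (T Y U)) (a Z Y U))
               (cmp (tm (idm Z) f) (a Z X U)))
        = tm (idm Z) (Tr U X Y f)) \<and>
     \<comment> \<open>yanking\<close>
     (\<forall>U\<in>Ob. Tr U U U (s U U) = idm U)"

section \<open>Concrete categories whose objects are sets\<close>

text \<open>Elements live in a universe type 'u; set-theoretic pairs are given by an
  injective pairing function pair; the one-point set is {one}.\<close>

definition injective_pairing :: "('u \<Rightarrow> 'u \<Rightarrow> 'u) \<Rightarrow> bool" where
  "injective_pairing pair \<longleftrightarrow> (\<forall>a b c d. pair a b = pair c d \<longrightarrow> a = c \<and> b = d)"

definition ptimes :: "('u \<Rightarrow> 'u \<Rightarrow> 'u) \<Rightarrow> 'u set \<Rightarrow> 'u set \<Rightarrow> 'u set" where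
  "ptimes pair X Y = {pair x y | x y. x \<in> X \<and> y \<in> Y}"

definition concrete_category :: "'u set set \<Rightarrow> ('u set \<Rightarrow> 'u set \<Rightarrow> ('u \<Rightarrow> 'u) set) \<Rightarrow> bool" where
  "concrete_category Obj Mor \<longleftrightarrow>
     (\<forall>X\<in>Obj. \<forall>Y\<in>Obj. Mor X Y \<subseteq> X \<rightarrow>\<^sub>E Y) \<and>
     (\<forall>X\<in>Obj. (\<lambda>x\<in>X. x) \<in> Mor X X) \<and>
     (\<forall>X\<in>Obj. \<forall>Y\<in>Obj. \<forall>Z\<in>Obj. \<forall>f\<in>Mor X Y. \<forall>g\<in>Mor Y Z. compose X g f \<in> Mor X Z)"

definition set_products_are_products ::
  "'u set set \<Rightarrow> ('u set \<Rightarrow> 'u set \<Rightarrow> ('u \<Rightarrow> 'u) set) \<Rightarrow> ('u \<Rightarrow> 'u \<Rightarrow> 'u) \<Rightarrow> 'u \<Rightarrow> bool" where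
  "set_products_are_products Obj Mor pair one \<longleftrightarrow>
     {one} \<in> Obj \<and>
     (\<forall>X\<in>Obj. (\<lambda>x\<in>X. one) \<in> Mor X {one}) \<and>
     (\<forall>X\<in>Obj. \<forall>Y\<in>Obj.
        ptimes pair X Y \<in> Obj \<and>
        (\<exists>p\<in>Mor (ptimes pair X Y) X. \<forall>x\<in>X. \<forall>y\<in>Y. p (pair x y) = x) \<and>
        (\<exists>q\<in>Mor (ptimes pair X Y) Y. \<forall>x\<in>X. \<forall>y\<in>Y. q (pair x y) = y) \<and>
        (\<forall>Z\<in>Obj. \<forall>f\<in>Mor Z X. \<forall>g\<in>Mor Z Y.
           (\<lambda>z\<in>Z. pair (f z) (g z)) \<in> Mor Z (ptimes pair X Y)))"

definition set_equalizers_are_equalizers ::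
  "'u set set \<Rightarrow> ('u set \<Rightarrow> 'u set \<Rightarrow> ('u \<Rightarrow> 'u) set) \<Rightarrow> bool" where
  "set_equalizers_are_equalizers Obj Mor \<longleftrightarrow>
     (\<forall>X\<in>Obj. \<forall>Y\<in>Obj. \<forall>f\<in>Mor X Y. \<forall>g\<in>Mor X Y.
        {x\<in>X. f x = g x} \<in> Obj \<and>
        (\<lambda>x\<in>{x\<in>X. f x = g x}. x) \<in> Mor {x\<in>X. f x = g x} X \<and>
        (\<forall>Z\<in>Obj. \<forall>h\<in>Mor Z X. (\<forall>z\<in>Z. f (h z) = g (h z)) \<longrightarrow> h \<in> Mor Z {x\<in>X. f x = g x}))"

definition graph :: "'u set \<Rightarrow> ('u \<Rightarrow> 'u) \<Rightarrow> ('u \<times> 'u) set" where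
  "graph X f = {(x, f x) | x. x \<in> X}"

definition range_rel :: "('u \<Rightarrow> 'u \<Rightarrow> 'u) \<Rightarrow> 'u set \<Rightarrow> ('u \<Rightarrow> 'u) \<Rightarrow> ('u \<times> 'u) set" where
  "range_rel pair U u = {(x, y). pair x y \<in> u ` U}"

definition is_C_relation ::
  "'u set set \<Rightarrow> ('u set \<Rightarrow> 'u set \<Rightarrow> ('u \<Rightarrow> 'u) set) \<Rightarrow> ('u \<Rightarrow> 'u \<Rightarrow> 'u)
   \<Rightarrow> 'u set \<Rightarrow> 'u set \<Rightarrow> ('u \<times> 'u) set \<Rightarrow> bool" where
  "is_C_relation Obj Mor pair X Y r \<longleftrightarrow>
     r \<subseteq> X \<times> Y \<and> (\<exists>U\<in>Obj. \<exists>u\<in>Mor U (ptimes pair X Y). r = range_rel pair U u)"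

definition graphs_are_ranges ::
  "'u set set \<Rightarrow> ('u set \<Rightarrow> 'u set \<Rightarrow> ('u \<Rightarrow> 'u) set) \<Rightarrow> ('u \<Rightarrow> 'u \<Rightarrow> 'u) \<Rightarrow> bool" where
  "graphs_are_ranges Obj Mor pair \<longleftrightarrow>
     (\<forall>X\<in>Obj. \<forall>Y\<in>Obj. \<forall>f\<in>Mor X Y. is_C_relation Obj Mor pair X Y (graph X f))"

section \<open>The category Rel(C)\<close>

definition RelHom ::
  "'u set set \<Rightarrow> ('u set \<Rightarrow> 'u set \<Rightarrow> ('u \<Rightarrow> 'u) set) \<Rightarrow> ('u \<Rightarrow> 'u \<Rightarrow> 'u)
   \<Rightarrow> 'u set \<Rightarrow> 'u set \<Rightarrow> ('u \<times> 'u) set set" where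
  "RelHom Obj Mor pair X Y = {r. is_C_relation Obj Mor pair X Y r}"

text \<open>rel_cmp s r = "first r, then s" (relational composition).\<close>
definition rel_cmp :: "('u \<times> 'u) set \<Rightarrow> ('u \<times> 'u) set \<Rightarrow> ('u \<times> 'u) set" where
  "rel_cmp s r = r O s"

definition rel_tensor :: "('u \<Rightarrow> 'u \<Rightarrow> 'u) \<Rightarrow> ('u \<times> 'u) set \<Rightarrow> ('u \<times> 'u) set \<Rightarrow> ('u \<times> 'u) set" where
  "rel_tensor pair r s = {(pair x x', pair y y') | x x' y y'. (x, y) \<in> r \<and> (x', y') \<in> s}"

definition rel_assoc :: "('u \<Rightarrow> 'u \<Rightarrow> 'u) \<Rightarrow> 'u set \<Rightarrow> 'u set \<Rightarrow> 'u set \<Rightarrow> ('u \<times> 'u) set" where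
  "rel_assoc pair X Y Z =
     {(pair (pair x y) z, pair x (pair y z)) | x y z. x \<in> X \<and> y \<in> Y \<and> z \<in> Z}"

definition rel_lunit :: "('u \<Rightarrow> 'u \<Rightarrow> 'u) \<Rightarrow> 'u \<Rightarrow> 'u set \<Rightarrow> ('u \<times> 'u) set" where
  "rel_lunit pair one X = {(pair one x, x) | x. x \<in> X}"

definition rel_runit :: "('u \<Rightarrow> 'u \<Rightarrow> 'u) \<Rightarrow> 'u \<Rightarrow> 'u set \<Rightarrow> ('u \<times> 'u) set" where
  "rel_runit pair one X = {(pair x one, x) | x. x \<in> X}"

definition rel_sym :: "('u \<Rightarrow> 'u \<Rightarrow> 'u) \<Rightarrow> 'u set \<Rightarrow> 'u set \<Rightarrow> ('u \<times> 'u) set" where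
  "rel_sym pair X Y = {(pair x y, pair y x) | x y. x \<in> X \<and> y \<in> Y}"

definition cart_trace :: "('u \<Rightarrow> 'u \<Rightarrow> 'u) \<Rightarrow> 'u set \<Rightarrow> ('u \<times> 'u) set \<Rightarrow> ('u \<times> 'u) set" where
  "cart_trace pair Z r = {(x, y). \<exists>z\<in>Z. (pair x z, pair y z) \<in> r}"

text \<open>C is (via f \<mapsto> graph f, identity on objects) a subcategory of Rel(C).\<close>
definition C_subcategory_of_RelC ::
  "'u set set \<Rightarrow> ('u set \<Rightarrow> 'u set \<Rightarrow> ('u \<Rightarrow> 'u) set) \<Rightarrow> ('u \<Rightarrow> 'u \<Rightarrow> 'u) \<Rightarrow> bool" where
  "C_subcategory_of_RelC Obj Mor pair \<longleftrightarrow>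
     (\<forall>X\<in>Obj. \<forall>Y\<in>Obj. \<forall>f\<in>Mor X Y. graph X f \<in> RelHom Obj Mor pair X Y) \<and>
     (\<forall>X\<in>Obj. graph X (\<lambda>x\<in>X. x) = Id_on X) \<and>
     (\<forall>X\<in>Obj. \<forall>Y\<in>Obj. \<forall>Z\<in>Obj. \<forall>f\<in>Mor X Y. \<forall>g\<in>Mor Y Z.
        graph X (compose X g f) = rel_cmp (graph Y g) (graph X f)) \<and>
     (\<forall>X\<in>Obj. \<forall>Y\<in>Obj. inj_on (graph X) (Mor X Y))"

definition is_function_rel :: "'u set \<Rightarrow> 'u set \<Rightarrow> ('u \<times> 'u) set \<Rightarrow> bool" where
  "is_function_rel X Y r \<longleftrightarrow> r \<subseteq> X \<times> Y \<and> (\<forall>x\<in>X. \<exists>!y. (x, y) \<in> r)"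

end

theory Submission
  imports Defs
begin

text \<open>A \<open>C\<close>-relation is the same thing as a span \<open>X \<leftarrow> U \<rightarrow> Y\<close> in \<open>C\<close>, read as the
  set of pairs \<open>(p u, q u)\<close>: this only uses that the set-theoretic product with its projections
  is a product in \<open>C\<close>. On spans the relational operations are computed by finite limits:
  the converse swaps the legs, the tensor is the product of spans, a composite is the pullback
  of the middle legs and the cartesian trace is the equalizer of the two \<open>Z\<close>-components.
  Pullbacks and equalizers are set-theoretic by hypothesis, so \<open>C\<close>-relations are closed under
  the traced symmetric monoidal structure of sets and relations, whose coherence equations
  they inherit.\<close>

locale injective_pair =
  fixes pair :: "'u \<Rightarrow> 'u \<Rightarrow> 'u"
  assumes injective_pair: "injective_pairing pair"
begin

abbreviation ptimes_infix :: "'u set \<Rightarrow> 'u set \<Rightarrow> 'u set" (infixr "\<Otimes>" 85)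
  where "X \<Otimes> Y \<equiv> ptimes pair X Y"

lemma pair_eq_iff [simp]: "pair a b = pair c d \<longleftrightarrow> a = c \<and> b = d"
  using injective_pair unfolding injective_pairing_def by blast

lemma pair_mem_ptimes_iff [simp]: "pair a b \<in> X \<Otimes> Y \<longleftrightarrow> a \<in> X \<and> b \<in> Y"
  unfolding ptimes_def by auto

lemma ptimesE [elim!]:
  assumes "w \<in> X \<Otimes> Y"
  obtains x y where "w = pair x y" "x \<in> X" "y \<in> Y"
  using assms unfolding ptimes_def by auto

lemma ptimes_relD:
  "f \<subseteq> A \<Otimes> B \<times> C \<Otimes> D \<Longrightarrow> (pair a b, pair c d) \<in> f \<Longrightarrow> a \<in> A \<and> b \<in> B \<and> c \<in> C \<and> d \<in> D"
  by auto

lemma rel_tensor_Id_on: "rel_tensor pair (Id_on X) (Id_on Y) = Id_on (X \<Otimes> Y)"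
  unfolding rel_tensor_def by auto

lemma rel_tensor_relcomp:
  "rel_tensor pair (f O g) (f' O g') = rel_tensor pair f f' O rel_tensor pair g g'"
  unfolding rel_tensor_def by (auto simp: relcomp_unfold) blast+

lemma rel_assoc_natural:
  assumes "f \<subseteq> X \<times> X'" "g \<subseteq> Y \<times> Y'" "h \<subseteq> Z \<times> Z'"
  shows "rel_tensor pair (rel_tensor pair f g) h O rel_assoc pair X' Y' Z'
       = rel_assoc pair X Y Z O rel_tensor pair f (rel_tensor pair g h)"
  using assms unfolding rel_tensor_def rel_assoc_def by (auto simp: relcomp_unfold Id_on_iff)

lemma rel_lunit_natural:
  "f \<subseteq> X \<times> Y \<Longrightarrow>
   rel_tensor pair (Id_on {one}) f O rel_lunit pair one Y = rel_lunit pair one X O f"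
  unfolding rel_tensor_def rel_lunit_def by (auto simp: relcomp_unfold Id_on_iff)

lemma rel_runit_natural:
  "f \<subseteq> X \<times> Y \<Longrightarrow>
   rel_tensor pair f (Id_on {one}) O rel_runit pair one Y = rel_runit pair one X O f"
  unfolding rel_tensor_def rel_runit_def by (auto simp: relcomp_unfold Id_on_iff)

lemma rel_assoc_pentagon:
  "rel_assoc pair (W \<Otimes> X) Y Z O rel_assoc pair W X (Y \<Otimes> Z) =
   (rel_tensor pair (rel_assoc pair W X Y) (Id_on Z) O rel_assoc pair W (X \<Otimes> Y) Z)
     O rel_tensor pair (Id_on W) (rel_assoc pair X Y Z)"
  unfolding rel_tensor_def rel_assoc_def by (auto simp: relcomp_unfold Id_on_iff)

lemma rel_assoc_triangle:
  "rel_assoc pair X {one} Y O rel_tensor pair (Id_on X) (rel_lunit pair one Y)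
   = rel_tensor pair (rel_runit pair one X) (Id_on Y)"
  unfolding rel_tensor_def rel_assoc_def rel_lunit_def rel_runit_def by (auto simp: relcomp_unfold Id_on_iff)

lemma rel_assoc_converse:
  "rel_assoc pair X Y Z O (rel_assoc pair X Y Z)\<inverse> = Id_on ((X \<Otimes> Y) \<Otimes> Z)"
  "(rel_assoc pair X Y Z)\<inverse> O rel_assoc pair X Y Z = Id_on (X \<Otimes> (Y \<Otimes> Z))"
  unfolding rel_assoc_def by auto

lemma rel_lunit_converse:
  "rel_lunit pair one X O (rel_lunit pair one X)\<inverse> = Id_on ({one} \<Otimes> X)"
  "(rel_lunit pair one X)\<inverse> O rel_lunit pair one X = Id_on X"
  unfolding rel_lunit_def by auto

lemma rel_runit_converse:
  "rel_runit pair one X O (rel_runit pair one X)\<inverse> = Id_on (X \<Otimes> {one})"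
  "(rel_runit pair one X)\<inverse> O rel_runit pair one X = Id_on X"
  unfolding rel_runit_def by auto

lemma rel_sym_natural:
  "f \<subseteq> X \<times> X' \<Longrightarrow> g \<subseteq> Y \<times> Y' \<Longrightarrow>
   rel_tensor pair f g O rel_sym pair X' Y' = rel_sym pair X Y O rel_tensor pair g f"
  unfolding rel_tensor_def rel_sym_def by (auto simp: relcomp_unfold Id_on_iff)

lemma rel_sym_involutive: "rel_sym pair X Y O rel_sym pair Y X = Id_on (X \<Otimes> Y)"
  unfolding rel_sym_def by auto

lemma rel_sym_hexagon:
  "(rel_assoc pair X Y Z O rel_sym pair X (Y \<Otimes> Z)) O rel_assoc pair Y Z X =
   (rel_tensor pair (rel_sym pair X Y) (Id_on Z) O rel_assoc pair Y X Z)
     O rel_tensor pair (Id_on Y) (rel_sym pair X Z)"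
  unfolding rel_tensor_def rel_assoc_def rel_sym_def by (auto simp: relcomp_unfold Id_on_iff)

lemma cart_trace_tightening:
  "cart_trace pair U ((rel_tensor pair g (Id_on U) O f) O rel_tensor pair h (Id_on U))
   = (g O cart_trace pair U f) O h"
  unfolding rel_tensor_def cart_trace_def by (auto simp: relcomp_unfold Id_on_iff)

lemma cart_trace_sliding:
  assumes "f \<subseteq> X \<Otimes> U \<times> Y \<Otimes> U'" "g \<subseteq> U' \<times> U"
  shows "cart_trace pair U (f O rel_tensor pair (Id_on Y) g)
       = cart_trace pair U' (rel_tensor pair (Id_on X) g O f)"
  using assms unfolding cart_trace_def rel_tensor_def
  by (auto simp: relcomp_unfold Id_on_iff dest: ptimes_relD)

lemma cart_trace_vanishing_unit:
  "f \<subseteq> X \<Otimes> {one} \<times> Y \<Otimes> {one} \<Longrightarrow>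
   rel_runit pair one X O cart_trace pair {one} f = f O rel_runit pair one Y"
  unfolding rel_runit_def cart_trace_def by (auto simp: relcomp_unfold)

lemma cart_trace_vanishing_tensor:
  "f \<subseteq> X \<Otimes> (U \<Otimes> V) \<times> Y \<Otimes> (U \<Otimes> V) \<Longrightarrow>
   cart_trace pair (U \<Otimes> V) f
   = cart_trace pair U (cart_trace pair V ((rel_assoc pair X U V O f) O (rel_assoc pair Y U V)\<inverse>))"
  unfolding rel_assoc_def cart_trace_def by (auto simp: relcomp_unfold Id_on_iff)

lemma cart_trace_superposing:
  "f \<subseteq> X \<Otimes> U \<times> Y \<Otimes> U \<Longrightarrow>
   cart_trace pair U ((rel_assoc pair Z X U O rel_tensor pair (Id_on Z) f) O (rel_assoc pair Z Y U)\<inverse>)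
   = rel_tensor pair (Id_on Z) (cart_trace pair U f)"
  unfolding rel_assoc_def rel_tensor_def cart_trace_def
  by (auto simp: relcomp_unfold Id_on_iff dest: ptimes_relD)

lemma cart_trace_yanking: "cart_trace pair U (rel_sym pair U U) = Id_on U"
  unfolding rel_sym_def cart_trace_def by auto

end

definition span_rel :: "'u set \<Rightarrow> ('u \<Rightarrow> 'u) \<Rightarrow> ('u \<Rightarrow> 'u) \<Rightarrow> ('u \<times> 'u) set" where
  "span_rel U p q = (\<lambda>u. (p u, q u)) ` U"

locale concrete_finitely_complete = injective_pair pair
  for Obj :: "'u set set"
    and Mor :: "'u set \<Rightarrow> 'u set \<Rightarrow> ('u \<Rightarrow> 'u) set"
    and pair :: "'u \<Rightarrow> 'u \<Rightarrow> 'u"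
    and one :: 'u +
  assumes concrete: "concrete_category Obj Mor"
    and products: "set_products_are_products Obj Mor pair one"
    and equalizers: "set_equalizers_are_equalizers Obj Mor"
begin

abbreviation RHom :: "'u set \<Rightarrow> 'u set \<Rightarrow> ('u \<times> 'u) set set"
  where "RHom \<equiv> RelHom Obj Mor pair"

lemma mor_PiE: "X \<in> Obj \<Longrightarrow> Y \<in> Obj \<Longrightarrow> f \<in> Mor X Y \<Longrightarrow> f \<in> X \<rightarrow>\<^sub>E Y"
  using concrete unfolding concrete_category_def by blast

lemma mor_apply: "X \<in> Obj \<Longrightarrow> Y \<in> Obj \<Longrightarrow> f \<in> Mor X Y \<Longrightarrow> x \<in> X \<Longrightarrow> f x \<in> Y"
  using mor_PiE by blast

lemma id_mor: "X \<in> Obj \<Longrightarrow> (\<lambda>x\<in>X. x) \<in> Mor X X"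
  using concrete unfolding concrete_category_def by blast

lemma compose_mor:
  "X \<in> Obj \<Longrightarrow> Y \<in> Obj \<Longrightarrow> Z \<in> Obj \<Longrightarrow> f \<in> Mor X Y \<Longrightarrow> g \<in> Mor Y Z \<Longrightarrow> compose X g f \<in> Mor X Z"
  using concrete unfolding concrete_category_def by blast

lemma one_obj: "{one} \<in> Obj"
  using products unfolding set_products_are_products_def by blast

lemma ptimes_obj: "X \<in> Obj \<Longrightarrow> Y \<in> Obj \<Longrightarrow> X \<Otimes> Y \<in> Obj"
  using products unfolding set_products_are_products_def by blast

definition tuple :: "'u set \<Rightarrow> ('u \<Rightarrow> 'u) \<Rightarrow> ('u \<Rightarrow> 'u) \<Rightarrow> 'u \<Rightarrow> 'u" where
  "tuple Z f g = (\<lambda>z\<in>Z. pair (f z) (g z))"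

lemma tuple_apply [simp]: "z \<in> Z \<Longrightarrow> tuple Z f g z = pair (f z) (g z)"
  unfolding tuple_def by simp

lemma tuple_mor:
  "X \<in> Obj \<Longrightarrow> Y \<in> Obj \<Longrightarrow> Z \<in> Obj \<Longrightarrow> f \<in> Mor Z X \<Longrightarrow> g \<in> Mor Z Y \<Longrightarrow> tuple Z f g \<in> Mor Z (X \<Otimes> Y)"
  using products unfolding set_products_are_products_def tuple_def by blast

definition pr1 :: "'u set \<Rightarrow> 'u set \<Rightarrow> 'u \<Rightarrow> 'u" where
  "pr1 X Y = (SOME p. p \<in> Mor (X \<Otimes> Y) X \<and> (\<forall>x\<in>X. \<forall>y\<in>Y. p (pair x y) = x))"

definition pr2 :: "'u set \<Rightarrow> 'u set \<Rightarrow> 'u \<Rightarrow> 'u" where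
  "pr2 X Y = (SOME q. q \<in> Mor (X \<Otimes> Y) Y \<and> (\<forall>x\<in>X. \<forall>y\<in>Y. q (pair x y) = y))"

lemma pr1_spec:
  assumes "X \<in> Obj" "Y \<in> Obj"
  shows "pr1 X Y \<in> Mor (X \<Otimes> Y) X \<and> (\<forall>x\<in>X. \<forall>y\<in>Y. pr1 X Y (pair x y) = x)"
proof -
  have "\<exists>p\<in>Mor (X \<Otimes> Y) X. \<forall>x\<in>X. \<forall>y\<in>Y. p (pair x y) = x"
    using products assms unfolding set_products_are_products_def by simp
  then show ?thesis
    unfolding pr1_def Bex_def by (rule someI_ex)
qed

lemma pr2_spec:
  assumes "X \<in> Obj" "Y \<in> Obj"
  shows "pr2 X Y \<in> Mor (X \<Otimes> Y) Y \<and> (\<forall>x\<in>X. \<forall>y\<in>Y. pr2 X Y (pair x y) = y)"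
proof -
  have "\<exists>q\<in>Mor (X \<Otimes> Y) Y. \<forall>x\<in>X. \<forall>y\<in>Y. q (pair x y) = y"
    using products assms unfolding set_products_are_products_def by simp
  then show ?thesis
    unfolding pr2_def Bex_def by (rule someI_ex)
qed

lemma pr1_mor: "X \<in> Obj \<Longrightarrow> Y \<in> Obj \<Longrightarrow> pr1 X Y \<in> Mor (X \<Otimes> Y) X"
  and pr2_mor: "X \<in> Obj \<Longrightarrow> Y \<in> Obj \<Longrightarrow> pr2 X Y \<in> Mor (X \<Otimes> Y) Y"
  and pr1_pair [simp]: "X \<in> Obj \<Longrightarrow> Y \<in> Obj \<Longrightarrow> x \<in> X \<Longrightarrow> y \<in> Y \<Longrightarrow> pr1 X Y (pair x y) = x"
  and pr2_pair [simp]: "X \<in> Obj \<Longrightarrow> Y \<in> Obj \<Longrightarrow> x \<in> X \<Longrightarrow> y \<in> Y \<Longrightarrow> pr2 X Y (pair x y) = y"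
  using pr1_spec pr2_spec by blast+

lemma equalizer_obj:
  "X \<in> Obj \<Longrightarrow> Y \<in> Obj \<Longrightarrow> f \<in> Mor X Y \<Longrightarrow> g \<in> Mor X Y \<Longrightarrow> {x\<in>X. f x = g x} \<in> Obj"
  using equalizers unfolding set_equalizers_are_equalizers_def by blast

lemma equalizer_incl_mor:
  "X \<in> Obj \<Longrightarrow> Y \<in> Obj \<Longrightarrow> f \<in> Mor X Y \<Longrightarrow> g \<in> Mor X Y \<Longrightarrow>
   (\<lambda>x\<in>{x\<in>X. f x = g x}. x) \<in> Mor {x\<in>X. f x = g x} X"
  using equalizers unfolding set_equalizers_are_equalizers_def by blast

lemma RelHom_iff_span:
  assumes X: "X \<in> Obj" and Y: "Y \<in> Obj"
  shows "r \<in> RHom X Y \<longleftrightarrow> (\<exists>U\<in>Obj. \<exists>p\<in>Mor U X. \<exists>q\<in>Mor U Y. r = span_rel U p q)"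
proof
  assume "r \<in> RHom X Y"
  then obtain U u where U: "U \<in> Obj" and u: "u \<in> Mor U (X \<Otimes> Y)" and r: "r = range_rel pair U u"
    unfolding RelHom_def is_C_relation_def by blast
  define p where "p = compose U (pr1 X Y) u"
  define q where "q = compose U (pr2 X Y) u"
  have "u a = pair (p a) (q a)" if "a \<in> U" for a
    using mor_apply[OF U ptimes_obj[OF X Y] u that] X Y that by (auto simp: p_def q_def compose_eq)
  then have "r = span_rel U p q"
    unfolding r range_rel_def span_rel_def by force
  moreover have "p \<in> Mor U X" "q \<in> Mor U Y"
    unfolding p_def q_def
    using compose_mor[OF U ptimes_obj[OF X Y] _ u] pr1_mor[OF X Y] pr2_mor[OF X Y] X Y by auto
  ultimately show "\<exists>U\<in>Obj. \<exists>p\<in>Mor U X. \<exists>q\<in>Mor U Y. r = span_rel U p q"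
    using U by blast
next
  assume "\<exists>U\<in>Obj. \<exists>p\<in>Mor U X. \<exists>q\<in>Mor U Y. r = span_rel U p q"
  then obtain U p q where U: "U \<in> Obj" and p: "p \<in> Mor U X" and q: "q \<in> Mor U Y"
    and r: "r = span_rel U p q" by blast
  have "range_rel pair U (tuple U p q) = r"
    unfolding r range_rel_def span_rel_def by auto
  moreover have "r \<subseteq> X \<times> Y"
    unfolding r span_rel_def using mor_apply[OF U X p] mor_apply[OF U Y q] by auto
  ultimately show "r \<in> RHom X Y"
    unfolding RelHom_def is_C_relation_def using tuple_mor[OF X Y U p q] U by blast
qed

lemma span_rel_RelHom:
  "U \<in> Obj \<Longrightarrow> X \<in> Obj \<Longrightarrow> Y \<in> Obj \<Longrightarrow> p \<in> Mor U X \<Longrightarrow> q \<in> Mor U Y \<Longrightarrow> span_rel U p q \<in> RHom X Y"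
  by (subst RelHom_iff_span) blast+

lemma RelHom_spanE:
  assumes "X \<in> Obj" "Y \<in> Obj" "r \<in> RHom X Y"
  obtains U p q where "U \<in> Obj" "p \<in> Mor U X" "q \<in> Mor U Y" "r = span_rel U p q"
  using assms(3) unfolding RelHom_iff_span[OF assms(1,2)] by blast

lemma RelHom_subset: "X \<in> Obj \<Longrightarrow> Y \<in> Obj \<Longrightarrow> r \<in> RHom X Y \<Longrightarrow> r \<subseteq> X \<times> Y"
  unfolding RelHom_def is_C_relation_def by blast

lemma span_rel_equalizer_RelHom:
  assumes "U \<in> Obj" "X \<in> Obj" "Y \<in> Obj" "Z \<in> Obj"
    and "p \<in> Mor U X" "q \<in> Mor U Y" "f \<in> Mor U Z" "g \<in> Mor U Z"
  shows "span_rel {u\<in>U. f u = g u} p q \<in> RHom X Y"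
proof -
  let ?E = "{u\<in>U. f u = g u}" and ?incl = "\<lambda>u\<in>{u\<in>U. f u = g u}. u"
  have E: "?E \<in> Obj" and incl: "?incl \<in> Mor ?E U"
    using equalizer_obj[OF assms(1,4,7,8)] equalizer_incl_mor[OF assms(1,4,7,8)] .
  have "span_rel ?E p q = span_rel ?E (compose ?E p ?incl) (compose ?E q ?incl)"
    unfolding span_rel_def by (auto simp: compose_eq)
  then show ?thesis
    using span_rel_RelHom[OF E assms(2,3) compose_mor[OF E assms(1,2) incl assms(5)]
        compose_mor[OF E assms(1,3) incl assms(6)]] by simp
qed

lemma graph_RelHom:
  assumes "X \<in> Obj" "Y \<in> Obj" "f \<in> Mor X Y"
  shows "graph X f \<in> RHom X Y"
proof -
  have "graph X f = span_rel X (\<lambda>x\<in>X. x) f"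
    unfolding graph_def span_rel_def by auto
  then show ?thesis
    using span_rel_RelHom[OF assms(1,1,2) id_mor[OF assms(1)] assms(3)] by simp
qed

lemma Id_on_RelHom:
  assumes "X \<in> Obj"
  shows "Id_on X \<in> RHom X X"
proof -
  have "graph X (\<lambda>x\<in>X. x) = Id_on X"
    unfolding graph_def by auto
  then show ?thesis
    using graph_RelHom[OF assms assms id_mor[OF assms]] by simp
qed

lemma converse_RelHom:
  assumes "X \<in> Obj" "Y \<in> Obj" "r \<in> RHom X Y"
  shows "r\<inverse> \<in> RHom Y X"
proof -
  obtain U p q where U: "U \<in> Obj" and "p \<in> Mor U X" "q \<in> Mor U Y" "r = span_rel U p q"
    using assms by (rule RelHom_spanE)
  moreover have "(span_rel U p q)\<inverse> = span_rel U q p"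
    unfolding span_rel_def by auto
  ultimately show ?thesis
    using span_rel_RelHom[OF U assms(2,1)] by simp
qed

lemma relcomp_RelHom:
  assumes X: "X \<in> Obj" and Y: "Y \<in> Obj" and Z: "Z \<in> Obj"
    and "r \<in> RHom X Y" "s \<in> RHom Y Z"
  shows "r O s \<in> RHom X Z"
proof -
  obtain U p q where U: "U \<in> Obj" and p: "p \<in> Mor U X" and q: "q \<in> Mor U Y"
    and r: "r = span_rel U p q"
    using X Y assms(4) by (rule RelHom_spanE)
  obtain V p' q' where V: "V \<in> Obj" and p': "p' \<in> Mor V Y" and q': "q' \<in> Mor V Z"
    and s: "s = span_rel V p' q'"
    using Y Z assms(5) by (rule RelHom_spanE)
  let ?W = "U \<Otimes> V"
  have W: "?W \<in> Obj" and pr1_UV: "pr1 U V \<in> Mor ?W U" and pr2_UV: "pr2 U V \<in> Mor ?W V"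
    using ptimes_obj pr1_mor pr2_mor U V by blast+
  have "r O s = span_rel {w\<in>?W. compose ?W q (pr1 U V) w = compose ?W p' (pr2 U V) w}
                  (compose ?W p (pr1 U V)) (compose ?W q' (pr2 U V))"
    unfolding r s span_rel_def using U V
    by (auto simp: compose_eq relcomp_unfold intro!: image_eqI[where x = "pair _ _"]) blast
  then show ?thesis
    using span_rel_equalizer_RelHom[OF W X Z Y] compose_mor[OF W U] compose_mor[OF W V]
      pr1_UV pr2_UV p q p' q' X Y Z by simp
qed

definition prod_map :: "'u set \<Rightarrow> 'u set \<Rightarrow> ('u \<Rightarrow> 'u) \<Rightarrow> ('u \<Rightarrow> 'u) \<Rightarrow> 'u \<Rightarrow> 'u" where
  "prod_map U V f g = tuple (U \<Otimes> V) (compose (U \<Otimes> V) f (pr1 U V)) (compose (U \<Otimes> V) g (pr2 U V))"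

lemma prod_map_pair [simp]:
  "U \<in> Obj \<Longrightarrow> V \<in> Obj \<Longrightarrow> u \<in> U \<Longrightarrow> v \<in> V \<Longrightarrow> prod_map U V f g (pair u v) = pair (f u) (g v)"
  unfolding prod_map_def by (simp add: compose_eq)

lemma prod_map_mor:
  assumes U: "U \<in> Obj" and V: "V \<in> Obj" and X: "X \<in> Obj" and Y: "Y \<in> Obj"
    and f: "f \<in> Mor U X" and g: "g \<in> Mor V Y"
  shows "prod_map U V f g \<in> Mor (U \<Otimes> V) (X \<Otimes> Y)"
proof -
  have UV: "U \<Otimes> V \<in> Obj"
    using ptimes_obj[OF U V] .
  show ?thesis
    unfolding prod_map_def
    by (rule tuple_mor[OF X Y UV compose_mor[OF UV U X pr1_mor[OF U V] f]
          compose_mor[OF UV V Y pr2_mor[OF U V] g]])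
qed

lemma rel_tensor_RelHom:
  assumes X: "X \<in> Obj" and Y: "Y \<in> Obj" and X': "X' \<in> Obj" and Y': "Y' \<in> Obj"
    and "r \<in> RHom X Y" "s \<in> RHom X' Y'"
  shows "rel_tensor pair r s \<in> RHom (X \<Otimes> X') (Y \<Otimes> Y')"
proof -
  obtain U p q where U: "U \<in> Obj" and p: "p \<in> Mor U X" and q: "q \<in> Mor U Y"
    and r: "r = span_rel U p q"
    using X Y assms(5) by (rule RelHom_spanE)
  obtain V p' q' where V: "V \<in> Obj" and p': "p' \<in> Mor V X'" and q': "q' \<in> Mor V Y'"
    and s: "s = span_rel V p' q'"
    using X' Y' assms(6) by (rule RelHom_spanE)
  have "rel_tensor pair r s = span_rel (U \<Otimes> V) (prod_map U V p p') (prod_map U V q q')"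
    unfolding r s span_rel_def rel_tensor_def using U V
    by (auto intro!: image_eqI[where x = "pair _ _"])
  then show ?thesis
    using span_rel_RelHom[OF ptimes_obj[OF U V] ptimes_obj[OF X X'] ptimes_obj[OF Y Y']]
      prod_map_mor[OF U V X X' p p'] prod_map_mor[OF U V Y Y' q q'] by simp
qed

lemma cart_trace_RelHom:
  assumes X: "X \<in> Obj" and Y: "Y \<in> Obj" and Z: "Z \<in> Obj"
    and "r \<in> RHom (X \<Otimes> Z) (Y \<Otimes> Z)"
  shows "cart_trace pair Z r \<in> RHom X Y"
proof -
  have XZ: "X \<Otimes> Z \<in> Obj" and YZ: "Y \<Otimes> Z \<in> Obj"
    using ptimes_obj X Y Z by blast+
  obtain U p q where U: "U \<in> Obj" and p: "p \<in> Mor U (X \<Otimes> Z)" and q: "q \<in> Mor U (Y \<Otimes> Z)"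
    and r: "r = span_rel U p q"
    using XZ YZ assms(4) by (rule RelHom_spanE)
  let ?E = "{u\<in>U. compose U (pr2 X Z) p u = compose U (pr2 Y Z) q u}"
  have "cart_trace pair Z r = span_rel ?E (compose U (pr1 X Z) p) (compose U (pr1 Y Z) q)"
    (is "?L = ?R")
  proof (intro equalityI subsetI)
    fix xy assume "xy \<in> ?L"
    then obtain x y z u where xy: "xy = (x, y)" and u: "u \<in> U" and z: "z \<in> Z"
      and pu: "p u = pair x z" and qu: "q u = pair y z"
      unfolding r cart_trace_def span_rel_def by (auto simp flip: pair_eq_iff)
    have "x \<in> X" "y \<in> Y"
      using mor_apply[OF U XZ p u] mor_apply[OF U YZ q u] pu qu by auto
    then show "xy \<in> ?R"
      unfolding span_rel_def using xy u z pu qu X Y Z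
      by (auto simp: compose_eq intro!: image_eqI[where x = u])
  next
    fix xy assume "xy \<in> ?R"
    then obtain u where u: "u \<in> U" and eq: "pr2 X Z (p u) = pr2 Y Z (q u)"
      and xy: "xy = (pr1 X Z (p u), pr1 Y Z (q u))"
      unfolding span_rel_def by (auto simp: compose_eq)
    obtain x z where "p u = pair x z" "x \<in> X" "z \<in> Z"
      using mor_apply[OF U XZ p u] by blast
    moreover obtain y z' where "q u = pair y z'" "y \<in> Y" "z' \<in> Z"
      using mor_apply[OF U YZ q u] by blast
    ultimately show "xy \<in> ?L"
      unfolding r cart_trace_def span_rel_def using u eq xy X Y Z by force
  qed
  then show ?thesis
    using span_rel_equalizer_RelHom[OF U X Y Z] compose_mor[OF U XZ] compose_mor[OF U YZ]
      pr1_mor pr2_mor p q X Y Z by simp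
qed

lemma rel_assoc_RelHom:
  assumes X: "X \<in> Obj" and Y: "Y \<in> Obj" and Z: "Z \<in> Obj"
  shows "rel_assoc pair X Y Z \<in> RHom ((X \<Otimes> Y) \<Otimes> Z) (X \<Otimes> (Y \<Otimes> Z))"
proof -
  let ?A = "(X \<Otimes> Y) \<Otimes> Z"
  have XY: "X \<Otimes> Y \<in> Obj" and A: "?A \<in> Obj"
    using ptimes_obj X Y Z by blast+
  let ?a = "tuple ?A (compose ?A (pr1 X Y) (pr1 (X \<Otimes> Y) Z))
                     (prod_map (X \<Otimes> Y) Z (pr2 X Y) (\<lambda>z\<in>Z. z))"
  have "rel_assoc pair X Y Z = graph ?A ?a"
    unfolding rel_assoc_def graph_def using X Y Z by (auto simp: compose_eq ptimes_obj)
  moreover have "?a \<in> Mor ?A (X \<Otimes> (Y \<Otimes> Z))"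
    using tuple_mor[OF X ptimes_obj[OF Y Z] A
        compose_mor[OF A XY X pr1_mor[OF XY Z] pr1_mor[OF X Y]]
        prod_map_mor[OF XY Z Y Z pr2_mor[OF X Y] id_mor[OF Z]]] .
  ultimately show ?thesis
    using graph_RelHom[OF A ptimes_obj[OF X ptimes_obj[OF Y Z]]] by simp
qed

lemma rel_lunit_RelHom:
  assumes "X \<in> Obj"
  shows "rel_lunit pair one X \<in> RHom ({one} \<Otimes> X) X"
proof -
  have "rel_lunit pair one X = graph ({one} \<Otimes> X) (pr2 {one} X)"
    unfolding rel_lunit_def graph_def using assms one_obj by auto
  then show ?thesis
    using graph_RelHom[OF ptimes_obj[OF one_obj assms] assms pr2_mor[OF one_obj assms]] by simp
qed

lemma rel_runit_RelHom:
  assumes "X \<in> Obj"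
  shows "rel_runit pair one X \<in> RHom (X \<Otimes> {one}) X"
proof -
  have "rel_runit pair one X = graph (X \<Otimes> {one}) (pr1 X {one})"
    unfolding rel_runit_def graph_def using assms one_obj by auto
  then show ?thesis
    using graph_RelHom[OF ptimes_obj[OF assms one_obj] assms pr1_mor[OF assms one_obj]] by simp
qed

lemma rel_sym_RelHom:
  assumes "X \<in> Obj" "Y \<in> Obj"
  shows "rel_sym pair X Y \<in> RHom (X \<Otimes> Y) (Y \<Otimes> X)"
proof -
  have "rel_sym pair X Y = graph (X \<Otimes> Y) (tuple (X \<Otimes> Y) (pr2 X Y) (pr1 X Y))"
    unfolding rel_sym_def graph_def using assms by auto
  then show ?thesis
    using graph_RelHom ptimes_obj tuple_mor pr1_mor pr2_mor assms by simp
qed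

lemma converse_inverse_is_iso:
  assumes A: "A \<in> Obj" and B: "B \<in> Obj" and a: "a \<in> RHom A B"
    and left: "a O a\<inverse> = Id_on A" and right: "a\<inverse> O a = Id_on B"
  shows "is_iso RHom rel_cmp Id_on A B a" "cinv RHom rel_cmp Id_on A B a = a\<inverse>"
proof -
  have ai: "a\<inverse> \<in> RHom B A"
    using converse_RelHom[OF A B a] .
  then show "is_iso RHom rel_cmp Id_on A B a"
    unfolding is_iso_def rel_cmp_def using a left right by blast
  show "cinv RHom rel_cmp Id_on A B a = a\<inverse>"
    unfolding cinv_def rel_cmp_def
  proof (rule the_equality)
    fix g assume g: "g \<in> RHom B A \<and> a O g = Id_on A \<and> g O a = Id_on B"
    have "g = (a\<inverse> O a) O g"
      using RelHom_subset[OF B A] g right by auto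
    also have "\<dots> = a\<inverse>"
      using RelHom_subset[OF B A ai] g by (auto simp: O_assoc)
    finally show "g = a\<inverse>" .
  qed (use ai left right in blast)
qed

lemma monoidal:
  "is_monoidal_category Obj RHom rel_cmp Id_on (ptimes pair) (rel_tensor pair) {one}
     (rel_assoc pair) (rel_lunit pair one) (rel_runit pair one)"
  unfolding is_monoidal_category_def is_category_def
  apply (intro conjI ballI)
  subgoal by (rule Id_on_RelHom)
  subgoal unfolding rel_cmp_def by (rule relcomp_RelHom)
  subgoal premises p unfolding rel_cmp_def using RelHom_subset[OF p] by auto
  subgoal premises p unfolding rel_cmp_def using RelHom_subset[OF p] by auto
  subgoal unfolding rel_cmp_def by (simp add: O_assoc)
  subgoal by (rule one_obj)
  subgoal by (rule ptimes_obj)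
  subgoal by (rule rel_tensor_RelHom)
  subgoal by (rule rel_tensor_Id_on)
  subgoal unfolding rel_cmp_def by (rule rel_tensor_relcomp)
  subgoal by (intro converse_inverse_is_iso(1) rel_assoc_RelHom ptimes_obj rel_assoc_converse)
  subgoal unfolding rel_cmp_def by (rule rel_assoc_natural; rule RelHom_subset)
  subgoal by (intro converse_inverse_is_iso(1) rel_lunit_RelHom ptimes_obj one_obj rel_lunit_converse)
  subgoal unfolding rel_cmp_def by (rule rel_lunit_natural, rule RelHom_subset)
  subgoal by (intro converse_inverse_is_iso(1) rel_runit_RelHom ptimes_obj one_obj rel_runit_converse)
  subgoal unfolding rel_cmp_def by (rule rel_runit_natural, rule RelHom_subset)
  subgoal unfolding rel_cmp_def by (rule rel_assoc_pentagon)
  subgoal unfolding rel_cmp_def by (rule rel_assoc_triangle)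
  done

lemma symmetric_monoidal:
  "is_symmetric_monoidal_category Obj RHom rel_cmp Id_on (ptimes pair) (rel_tensor pair) {one}
     (rel_assoc pair) (rel_lunit pair one) (rel_runit pair one) (rel_sym pair)"
  unfolding is_symmetric_monoidal_category_def rel_cmp_def
  apply (intro conjI ballI)
  subgoal using monoidal unfolding rel_cmp_def .
  subgoal by (rule rel_sym_RelHom)
  subgoal premises p by (rule rel_sym_natural[OF RelHom_subset[OF p(1,3,5)] RelHom_subset[OF p(2,4,6)]])
  subgoal by (rule rel_sym_involutive)
  subgoal by (rule rel_sym_hexagon)
  done

lemma cinv_rel_assoc:
  "X \<in> Obj \<Longrightarrow> Y \<in> Obj \<Longrightarrow> Z \<in> Obj \<Longrightarrow>
   cinv RHom rel_cmp Id_on ((X \<Otimes> Y) \<Otimes> Z) (X \<Otimes> (Y \<Otimes> Z)) (rel_assoc pair X Y Z)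
   = (rel_assoc pair X Y Z)\<inverse>"
  by (intro converse_inverse_is_iso(2) rel_assoc_RelHom ptimes_obj rel_assoc_converse)

lemma traced_symmetric_monoidal:
  "is_traced_symmetric_monoidal_category Obj RHom rel_cmp Id_on (ptimes pair) (rel_tensor pair) {one}
     (rel_assoc pair) (rel_lunit pair one) (rel_runit pair one) (rel_sym pair)
     (\<lambda>U X Y r. cart_trace pair U r)"
  unfolding is_traced_symmetric_monoidal_category_def
  apply (intro conjI ballI)
  subgoal by (rule symmetric_monoidal)
  subgoal by (rule cart_trace_RelHom)
  subgoal unfolding rel_cmp_def by (rule cart_trace_tightening)
  subgoal premises p unfolding rel_cmp_def
    by (rule cart_trace_sliding[OF RelHom_subset[OF ptimes_obj[OF p(3,1)] ptimes_obj[OF p(4,2)] p(5)]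
          RelHom_subset[OF p(2,1,6)]])
  subgoal premises p unfolding rel_cmp_def
    by (rule cart_trace_vanishing_unit[OF RelHom_subset[OF ptimes_obj[OF p(1) one_obj] ptimes_obj[OF p(2) one_obj] p(3)]])
  subgoal premises p unfolding rel_cmp_def cinv_rel_assoc[OF p(4,1,2)]
    by (rule cart_trace_vanishing_tensor[OF RelHom_subset[OF ptimes_obj[OF p(3) ptimes_obj[OF p(1,2)]]
          ptimes_obj[OF p(4) ptimes_obj[OF p(1,2)]] p(5)]])
  subgoal premises p unfolding rel_cmp_def cinv_rel_assoc[OF p(4,3,1)]
    by (rule cart_trace_superposing[OF RelHom_subset[OF ptimes_obj[OF p(2,1)] ptimes_obj[OF p(3,1)] p(5)]])
  subgoal by (rule cart_trace_yanking)
  done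

lemma graph_inj_on:
  assumes "X \<in> Obj" "Y \<in> Obj"
  shows "inj_on (graph X) (Mor X Y)"
proof (rule inj_onI)
  fix f g assume f: "f \<in> Mor X Y" and g: "g \<in> Mor X Y" and eq: "graph X f = graph X g"
  have "f x = g x" if "x \<in> X" for x
    using eq that unfolding graph_def by blast
  then show "f = g"
    using mor_PiE[OF assms f] mor_PiE[OF assms g] PiE_ext by metis
qed

lemma C_subcategory: "C_subcategory_of_RelC Obj Mor pair"
  unfolding C_subcategory_of_RelC_def
proof (intro conjI ballI)
  fix X Y f assume "X \<in> Obj" "Y \<in> Obj" "f \<in> Mor X Y"
  then show "graph X f \<in> RHom X Y"
    by (rule graph_RelHom)
next
  fix X show "graph X (\<lambda>x\<in>X. x) = Id_on X"
    unfolding graph_def by auto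
next
  fix X Y Z f g assume "X \<in> Obj" "Y \<in> Obj" "f \<in> Mor X Y"
  then show "graph X (compose X g f) = rel_cmp (graph Y g) (graph X f)"
    unfolding graph_def rel_cmp_def using mor_apply by (auto simp: compose_eq relcomp_unfold)
qed (rule graph_inj_on)

lemma function_rel_graph:
  assumes "is_function_rel X Y r"
  obtains f where "f \<in> X \<rightarrow>\<^sub>E Y" "graph X f = r"
proof
  define f where "f = (\<lambda>x\<in>X. THE y. (x, y) \<in> r)"
  have sub: "r \<subseteq> X \<times> Y" and unique: "\<And>x. x \<in> X \<Longrightarrow> \<exists>!y. (x, y) \<in> r"
    using assms unfolding is_function_rel_def by auto
  have f: "(x, f x) \<in> r" if "x \<in> X" for x
    unfolding f_def using that theI'[OF unique] by simp
  then show "f \<in> X \<rightarrow>\<^sub>E Y"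
    using sub by (auto simp: f_def)
  show "graph X f = r"
  proof (intro equalityI subsetI)
    fix xy assume "xy \<in> r"
    then obtain x y where "xy = (x, y)" "x \<in> X" "(x, y) \<in> r"
      using sub by blast
    moreover have "y = f x"
      using unique f calculation(2,3) by blast
    ultimately show "xy \<in> graph X f"
      unfolding graph_def by blast
  qed (use f in \<open>auto simp: graph_def\<close>)
qed

lemma function_RelHom_eq_graphs:
  assumes mor_iff: "\<forall>X\<in>Obj. \<forall>Y\<in>Obj. \<forall>f\<in>X \<rightarrow>\<^sub>E Y. f \<in> Mor X Y \<longleftrightarrow> is_C_relation Obj Mor pair X Y (graph X f)"
    and X: "X \<in> Obj" and Y: "Y \<in> Obj"
  shows "{r \<in> RHom X Y. is_function_rel X Y r} = graph X ` Mor X Y"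
proof (intro equalityI subsetI)
  fix r assume "r \<in> {r \<in> RHom X Y. is_function_rel X Y r}"
  then have r: "r \<in> RHom X Y" and "is_function_rel X Y r"
    by auto
  from this(2) obtain f where f: "f \<in> X \<rightarrow>\<^sub>E Y" and graph_f: "graph X f = r"
    by (rule function_rel_graph)
  have "f \<in> Mor X Y"
    using mor_iff X Y f r graph_f unfolding RelHom_def by blast
  then show "r \<in> graph X ` Mor X Y"
    using graph_f by blast
next
  fix r assume "r \<in> graph X ` Mor X Y"
  then obtain f where f: "f \<in> Mor X Y" and r: "r = graph X f"
    by blast
  have "is_function_rel X Y (graph X f)"
    unfolding is_function_rel_def graph_def using mor_apply[OF X Y f] by auto
  then show "r \<in> {r \<in> RHom X Y. is_function_rel X Y r}"
    using graph_RelHom[OF X Y f] r by blast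
qed

end

theorem theorem5p1:
  fixes Obj :: "'u set set"
    and Mor :: "'u set \<Rightarrow> 'u set \<Rightarrow> ('u \<Rightarrow> 'u) set"
    and pair :: "'u \<Rightarrow> 'u \<Rightarrow> 'u"
    and one :: 'u
  assumes "injective_pairing pair"
    and "concrete_category Obj Mor"
    and "set_products_are_products Obj Mor pair one"
    and "set_equalizers_are_equalizers Obj Mor"
    and "graphs_are_ranges Obj Mor pair"
  shows "is_traced_symmetric_monoidal_category Obj (RelHom Obj Mor pair) rel_cmp Id_on
           (ptimes pair) (rel_tensor pair) {one} (rel_assoc pair) (rel_lunit pair one)
           (rel_runit pair one) (rel_sym pair) (\<lambda>U X Y r. cart_trace pair U r)
         \<and> C_subcategory_of_RelC Obj Mor pair
         \<and> ((\<forall>X\<in>Obj. \<forall>Y\<in>Obj. \<forall>f\<in>X \<rightarrow>\<^sub>E Y.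
                f \<in> Mor X Y \<longleftrightarrow> is_C_relation Obj Mor pair X Y (graph X f))
            \<longrightarrow> (\<forall>X\<in>Obj. \<forall>Y\<in>Obj.
                 {r \<in> RelHom Obj Mor pair X Y. is_function_rel X Y r} = graph X ` Mor X Y))"
proof -
  interpret concrete_finitely_complete Obj Mor pair one
    using assms(1-4) by unfold_locales
  show ?thesis
    using traced_symmetric_monoidal C_subcategory function_RelHom_eq_graphs by blast
qed

end
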